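(* Let $c,d$ be positive integers, $\alpha,\delta\in(0,1]$, and $C_0\subseteq\mathbb{F}_2^d$ a linear code with minimum distance $d_0$, with $\delta d_0>1$. Let $\epsilon\in(0,\delta-\frac1{d_0})$ be a constant. Then for all sufficiently large $n$ and every $(c,d,\alpha,\delta)$-bipartite expander $G$ with $n$ left vertices (and any fixed orderings of the neighborhoods of right vertices), the minimum distance of the Tanner code $T(G,C_0)$ is greater than $f_\delta^{-1}\left(\frac1{d_0}+\epsilon\right)\alpha n$.
   Context: Binary linear codes; the minimum distance of a code is the least Hamming distance between two distinct codewords. A bipartite graph $G=(L\cup R,E)$ is $(c,d)$-regular if left degrees are $c$ and right degrees $d$; $N(S)$ is the neighborhood of $S$. A $(c,d,\alpha,\delta)$-bipartite expander is a $(c,d)$-regular bipartite graph with $|N(S)|\ge\delta c|S|$ for every $S\subseteq L$ with $|S|\le\alpha|L|$. Tanner code: $L=[n]$, for each $v\in R$ a fixed ordering of $N(v)$ defines $x_{N(v)}\in\mathbb{F}_2^d$ for $x\in\mathbb{F}_2^n$, and $T(G,C_0)=\{x: x_{N(v)}\in C_0\ \forall v\in R\}$. Size-Expansion Function: for $k>1$, $f_\delta(k)$ is the optimal value of the linear program in variables $\beta_i$, $i\in\mathbb{N}^+$: minimize $\frac1k\sum_{i\ge1}\beta_i$ subject to $\sum_{i\ge1}i\beta_i=k$, $\sum_{i\ge1}\left(1-(1-\frac1k)^i\right)\beta_i\ge\delta$, $\beta_i\ge0$. For $y\in(0,\delta)$, $f_\delta^{-1}(y)$ denotes the value $k>1$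 with $f_\delta(k)=y$. The parameters $c,d,\alpha,\delta,C_0,\epsilon$ are constants independent of $n$. *)

theory Defs
  imports "HOL-Analysis.Analysis" "HOL-Library.Extended_Real"
begin

(* Binary vectors of length k: functions nat => bool (True = 1 in F_2) vanishing outside {0..<k}. *)
definition bvecs :: "nat \<Rightarrow> (nat \<Rightarrow> bool) set" where
  "bvecs k = {x. \<forall>i. k \<le> i \<longrightarrow> \<not> x i}"

definition hamming_dist :: "(nat \<Rightarrow> bool) \<Rightarrow> (nat \<Rightarrow> bool) \<Rightarrow> nat" where
  "hamming_dist x y = card {i. x i \<noteq> y i}"

(* Binary linear code of length k: an F_2-subspace of F_2^k (addition in F_2 = xor). *)
definition binary_linear_code :: "nat \<Rightarrow> (nat \<Rightarrow> bool) set \<Rightarrow> bool" where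
  "binary_linear_code k C \<longleftrightarrow> C \<subseteq> bvecs k \<and> (\<lambda>_. False) \<in> C \<and>
     (\<forall>x\<in>C. \<forall>y\<in>C. (\<lambda>i. x i \<noteq> y i) \<in> C)"

(* Minimum distance (infinity if fewer than two codewords). *)
definition min_dist :: "(nat \<Rightarrow> bool) set \<Rightarrow> enat" where
  "min_dist C = (INF p \<in> {(x, y). x \<in> C \<and> y \<in> C \<and> x \<noteq> y}. enat (hamming_dist (fst p) (snd p)))"

(* A bipartite graph with left vertices {0..<n}, right vertices {0..<m}, where
   nbr v i (i < d) is the i-th neighbour of right vertex v in its fixed ordering. *)
definition nbhd :: "nat \<Rightarrow> nat \<Rightarrow> (nat \<Rightarrow> nat \<Rightarrow> nat) \<Rightarrow> nat set \<Rightarrow> nat set" where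
  "nbhd m d nbr S = {v. v < m \<and> (\<exists>i<d. nbr v i \<in> S)}"

definition cd_regular :: "nat \<Rightarrow> nat \<Rightarrow> nat \<Rightarrow> nat \<Rightarrow> (nat \<Rightarrow> nat \<Rightarrow> nat) \<Rightarrow> bool" where
  "cd_regular c d n m nbr \<longleftrightarrow>
     (\<forall>v<m. inj_on (nbr v) {0..<d} \<and> nbr v ` {0..<d} \<subseteq> {0..<n}) \<and>
     (\<forall>u<n. card {v. v < m \<and> u \<in> nbr v ` {0..<d}} = c)"

definition bipartite_expander ::
  "nat \<Rightarrow> nat \<Rightarrow> real \<Rightarrow> real \<Rightarrow> nat \<Rightarrow> nat \<Rightarrow> (nat \<Rightarrow> nat \<Rightarrow> nat) \<Rightarrow> bool" where
  "bipartite_expander c d \<alpha> \<delta> n m nbr \<longleftrightarrow> cd_regular c d n m nbr \<and>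
     (\<forall>S. S \<subseteq> {0..<n} \<and> real (card S) \<le> \<alpha> * real n \<longrightarrow>
        real (card (nbhd m d nbr S)) \<ge> \<delta> * real c * real (card S))"

definition tanner_code ::
  "nat \<Rightarrow> nat \<Rightarrow> nat \<Rightarrow> (nat \<Rightarrow> nat \<Rightarrow> nat) \<Rightarrow> (nat \<Rightarrow> bool) set \<Rightarrow> (nat \<Rightarrow> bool) set" where
  "tanner_code n m d nbr C0 =
     {x \<in> bvecs n. \<forall>v<m. (\<lambda>i. if i < d then x (nbr v i) else False) \<in> C0}"

(* Size-expansion function: optimal value (infimum) of the LP in variables beta_i, i >= 1
   (beta 0 is forced to 0). *)
definition size_exp :: "real \<Rightarrow> real \<Rightarrow> real" where
  "size_exp \<delta> k = Inf {(1 / k) * (\<Sum>i. \<beta> i) | \<beta>. \<beta> 0 = 0 \<and> (\<forall>i. \<beta> i \<ge> 0) \<and>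
      summable \<beta> \<and> (\<lambda>i. real i * \<beta> i) sums k \<and>
      summable (\<lambda>i. (1 - (1 - 1 / k) ^ i) * \<beta> i) \<and>
      (\<Sum>i. (1 - (1 - 1 / k) ^ i) * \<beta> i) \<ge> \<delta>}"

definition size_exp_inv :: "real \<Rightarrow> real \<Rightarrow> real" where
  "size_exp_inv \<delta> y = (THE k. k > 1 \<and> size_exp \<delta> k = y)"

end

theory Submission
  imports Defs
begin

(* Let x be a nonzero codeword of the Tanner code with support S, s = |S|. Every check adjacent
   to S sees a nonzero local codeword, hence at least d0 vertices of S, so |N(S)| <= c s / d0.
   Expansion of the subsets of size t = floor(alpha n) then forces s >= delta d0 t > t + d. Averaging
   the expansion over all t-subsets of S shows that the histogram of the numbers |S \<inter> N(v)|,
   suitably scaled, is a feasible point of the linear program defining size_exp delta' k, where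
   k = (s - d) / t and delta' = delta (s - d) / s; its objective value is |N(S)| / (c s) <= 1 / d0.
   The function size_exp delta is (1 / (1 - delta))-Lipschitz, strictly decreasing and tends to 0,
   so its inverse K at 1 / d0 + epsilon exists, and replacing delta' by delta and k by K costs
   only O(1 / t). If s <= K alpha n this yields 1 / d0 + epsilon <= 1 / d0 + O(1 / t), which fails
   for large n. When delta = 1 there are no expanders at all once alpha n >= 2, since d >= d0 >= 2
   and two neighbours of one check share it. *)

section \<open>The size-expansion linear program\<close>

(* The probability that at least one of i vertices survives when each is kept independently with
   probability 1 / k; it bounds the chance that a random subset of S of density 1 / k meets a check
   with i neighbours in S. *)
abbreviation coverage :: "real \<Rightarrow> nat \<Rightarrow> real" where
  "coverage k i \<equiv> 1 - (1 - 1 / k) ^ i"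

definition size_exp_feasible :: "real \<Rightarrow> real \<Rightarrow> (nat \<Rightarrow> real) \<Rightarrow> bool" where
  "size_exp_feasible \<delta> k \<beta> \<longleftrightarrow> \<beta> 0 = 0 \<and> (\<forall>i. 0 \<le> \<beta> i) \<and> summable \<beta> \<and>
     (\<lambda>i. real i * \<beta> i) sums k \<and> summable (\<lambda>i. coverage k i * \<beta> i) \<and>
     \<delta> \<le> (\<Sum>i. coverage k i * \<beta> i)"

lemma size_exp_eq_Inf:
  "size_exp \<delta> k = Inf ((\<lambda>\<beta>. suminf \<beta> / k) ` Collect (size_exp_feasible \<delta> k))"
  unfolding size_exp_def size_exp_feasible_def by (simp add: setcompr_eq_image)

lemma size_exp_feasibleI:
  assumes "\<beta> 0 = 0" "\<And>i. 0 \<le> \<beta> i" "\<beta> sums s" "(\<lambda>i. real i * \<beta> i) sums k"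
    and "(\<lambda>i. coverage k i * \<beta> i) sums w" "\<delta> \<le> w"
  shows "size_exp_feasible \<delta> k \<beta>"
  using assms unfolding size_exp_feasible_def by (auto simp: sums_iff)

lemma size_exp_feasibleD:
  assumes "size_exp_feasible \<delta> k \<beta>"
  shows "\<beta> 0 = 0" "0 \<le> \<beta> i" "\<beta> sums suminf \<beta>" "(\<lambda>i. real i * \<beta> i) sums k"
    and "(\<lambda>i. coverage k i * \<beta> i) sums (\<Sum>i. coverage k i * \<beta> i)"
    and "\<delta> \<le> (\<Sum>i. coverage k i * \<beta> i)"
  using assms unfolding size_exp_feasible_def by (auto simp: summable_sums)

lemma coverage_bounds:
  assumes "1 \<le> k"
  shows "0 \<le> coverage k i" "coverage k i \<le> 1"
proof -
  have "0 \<le> 1 - 1 / k" "1 - 1 / k \<le> 1" using assms by auto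
  then show "0 \<le> coverage k i" "coverage k i \<le> 1" by (auto simp: power_le_one)
qed

lemma coverage_mult_eq_sum: "0 < k \<Longrightarrow> coverage k i * k = (\<Sum>j<i. (1 - 1 / k) ^ j)"
  using one_diff_power_eq[of "1 - 1 / k" i] by simp

lemma coverage_mult_mono:
  assumes "1 \<le> k" "k \<le> k'"
  shows "coverage k i * k + (if 2 \<le> i then 1 / k - 1 / k' else 0) \<le> coverage k' i * k'"
proof -
  have q: "0 \<le> 1 - 1 / k" "1 - 1 / k \<le> 1 - 1 / k'"
    using assms by (auto simp: field_simps)
  have "(\<Sum>j<i. (1 - 1 / k) ^ j) + (if 2 \<le> i then 1 / k - 1 / k' else 0) \<le> (\<Sum>j<i. (1 - 1 / k') ^ j)"
  proof (cases "2 \<le> i")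
    case True
    then have split: "{..<i} = insert 1 ({..<i} - {1})" by auto
    have "(\<Sum>j\<in>{..<i} - {1}. (1 - 1 / k) ^ j) \<le> (\<Sum>j\<in>{..<i} - {1}. (1 - 1 / k') ^ j)"
      by (intro sum_mono power_mono q)
    then show ?thesis using True by (subst (1 2) split) (simp add: sum.insert_remove)
  qed (auto intro: sum_mono power_mono q)
  then show ?thesis using assms by (simp add: coverage_mult_eq_sum)
qed

lemma summable_coverage:
  assumes "summable \<beta>" "\<And>i. 0 \<le> \<beta> i" "1 \<le> k"
  shows "summable (\<lambda>i. coverage k i * \<beta> i)"
  by (rule summable_comparison_test_ev[OF _ assms(1)])
    (use assms coverage_bounds[OF assms(3)] in \<open>auto intro!: always_eventually mult_left_le_one_le\<close>)

lemma size_exp_feasible_mass_ge: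
  assumes "size_exp_feasible \<delta> k \<beta>" "1 \<le> k"
  shows "\<delta> \<le> suminf \<beta>"
proof -
  note f = size_exp_feasibleD[OF assms(1)]
  have "(\<Sum>i. coverage k i * \<beta> i) \<le> suminf \<beta>"
    by (rule suminf_le[OF _ sums_summable[OF f(5)] sums_summable[OF f(3)]])
      (use f(2) coverage_bounds[OF assms(2)] in \<open>auto intro: mult_left_le_one_le\<close>)
  then show ?thesis using f(6) by linarith
qed

lemma size_exp_feasible_point_mass:
  assumes "1 \<le> N" "0 \<le> k" "\<delta> \<le> coverage k N * k / N"
  shows "size_exp_feasible \<delta> k (\<lambda>i. if i = N then k / N else 0)"
proof (rule size_exp_feasibleI)
  have sums_at: "(\<lambda>i. f i * (if i = N then k / N else 0)) sums (f N * (k / N))" for f :: "nat \<Rightarrow> real"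
    using sums_finite[of "{N}" "\<lambda>i. f i * (if i = N then k / N else 0)"] by simp
  show "(\<lambda>i. if i = N then k / N else 0) sums (k / N)" using sums_at[of "\<lambda>_. 1"] by simp
  show "(\<lambda>i. real i * (if i = N then k / N else 0)) sums k" using sums_at[of real] assms(1) by simp
  show "(\<lambda>i. coverage k i * (if i = N then k / N else 0)) sums (coverage k N * k / N)"
    using sums_at[of "coverage k"] by simp
qed (use assms in auto)

lemma size_exp_feasible_unit:
  assumes "1 \<le> k" "\<delta> \<le> 1"
  shows "size_exp_feasible \<delta> k (\<lambda>i. if i = 1 then k else 0)"
proof -
  have "size_exp_feasible \<delta> k (\<lambda>i. if i = 1 then k / real 1 else 0)"
    by (rule size_exp_feasible_point_mass) (use assms in auto)
  then show ?thesis by (simp only: of_nat_1 div_by_1)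
qed

lemma size_exp_le:
  assumes "size_exp_feasible \<delta> k \<beta>" "0 < k"
  shows "size_exp \<delta> k \<le> suminf \<beta> / k"
  unfolding size_exp_eq_Inf
proof (rule cInf_lower)
  have "0 \<le> suminf \<beta> / k" if "size_exp_feasible \<delta> k \<beta>" for \<beta>
    using size_exp_feasibleD(2,3)[OF that] assms(2) by (simp add: sums_iff suminf_nonneg)
  then show "bdd_below ((\<lambda>\<beta>. suminf \<beta> / k) ` Collect (size_exp_feasible \<delta> k))"
    by (auto intro!: bdd_belowI[where m = 0])
qed (use assms in auto)

lemma size_exp_ge:
  assumes "1 \<le> k" "\<delta> \<le> 1" "\<And>\<beta>. size_exp_feasible \<delta> k \<beta> \<Longrightarrow> a \<le> suminf \<beta> / k"
  shows "a \<le> size_exp \<delta> k"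
  unfolding size_exp_eq_Inf
  by (rule cInf_greatest) (use assms size_exp_feasible_unit in auto)

lemma size_exp_le_convex:
  assumes "size_exp_feasible \<delta>\<^sub>1 k \<beta>" "size_exp_feasible \<delta>\<^sub>2 k \<gamma>" "0 < k"
    and "0 \<le> \<theta>" "\<theta> \<le> 1" "\<delta> \<le> (1 - \<theta>) * \<delta>\<^sub>1 + \<theta> * \<delta>\<^sub>2"
  shows "size_exp \<delta> k \<le> (1 - \<theta>) * (suminf \<beta> / k) + \<theta> * (suminf \<gamma> / k)"
proof -
  note f = size_exp_feasibleD[OF assms(1)] and g = size_exp_feasibleD[OF assms(2)]
  have mix: "(\<lambda>i. h i * ((1 - \<theta>) * \<beta> i + \<theta> * \<gamma> i)) sums ((1 - \<theta>) * a + \<theta> * b)"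
    if "(\<lambda>i. h i * \<beta> i) sums a" "(\<lambda>i. h i * \<gamma> i) sums b" for h a b
    using sums_add[OF sums_mult[OF that(1), of "1 - \<theta>"] sums_mult[OF that(2), of \<theta>]]
    by (simp add: algebra_simps)
  have mass: "(\<lambda>i. (1 - \<theta>) * \<beta> i + \<theta> * \<gamma> i) sums ((1 - \<theta>) * suminf \<beta> + \<theta> * suminf \<gamma>)"
    using mix[of "\<lambda>_. 1"] f(3) g(3) by simp
  have "size_exp_feasible \<delta> k (\<lambda>i. (1 - \<theta>) * \<beta> i + \<theta> * \<gamma> i)"
  proof (rule size_exp_feasibleI[OF _ _ mass])
    show "(\<lambda>i. real i * ((1 - \<theta>) * \<beta> i + \<theta> * \<gamma> i)) sums k"
      using mix[OF f(4) g(4)] by (simp add: algebra_simps)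
    show "(\<lambda>i. coverage k i * ((1 - \<theta>) * \<beta> i + \<theta> * \<gamma> i)) sums
        ((1 - \<theta>) * (\<Sum>i. coverage k i * \<beta> i) + \<theta> * (\<Sum>i. coverage k i * \<gamma> i))"
      by (rule mix[OF f(5) g(5)])
    show "\<delta> \<le> (1 - \<theta>) * (\<Sum>i. coverage k i * \<beta> i) + \<theta> * (\<Sum>i. coverage k i * \<gamma> i)"
      using assms(4-6) mult_left_mono[OF f(6), of "1 - \<theta>"] mult_left_mono[OF g(6), of \<theta>]
      by linarith
  qed (use f(1,2) g(1,2) assms(4,5) in auto)
  from size_exp_le[OF this assms(3)] show ?thesis
    using sums_unique[OF mass, symmetric] by (simp add: add_divide_distrib)
qed

lemma sums_card_level_sets:
  fixes h :: "nat \<Rightarrow> real"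
  assumes "finite V"
  shows "(\<lambda>i. h i * real (card {v \<in> V. a v = i})) sums (\<Sum>v\<in>V. h (a v))"
proof -
  have "(\<lambda>i. h i * real (card {v \<in> V. a v = i})) sums (\<Sum>i\<in>a ` V. h i * real (card {v \<in> V. a v = i}))"
    by (rule sums_finite) (use assms in auto)
  also have "(\<Sum>i\<in>a ` V. h i * real (card {v \<in> V. a v = i})) = (\<Sum>i\<in>a ` V. \<Sum>v\<in>{v \<in> V. a v = i}. h (a v))"
    by (intro sum.cong) auto
  also have "\<dots> = (\<Sum>v\<in>V. h (a v))"
    using assms by (intro sum.group) auto
  finally show ?thesis .
qed

lemma size_exp_le_histogram:
  fixes a :: "'v \<Rightarrow> nat"
  assumes "finite V" "\<And>v. v \<in> V \<Longrightarrow> 0 < a v" "0 < k" "0 < C"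
    and "C * (\<Sum>v\<in>V. real (a v)) = k" "\<delta> \<le> C * (\<Sum>v\<in>V. coverage k (a v))"
  shows "size_exp \<delta> k \<le> C * real (card V) / k"
proof -
  define \<beta> where "\<beta> i = C * real (card {v \<in> V. a v = i})" for i
  have level: "(\<lambda>i. h i * \<beta> i) sums (C * (\<Sum>v\<in>V. h (a v)))" for h :: "nat \<Rightarrow> real"
    using sums_mult[OF sums_card_level_sets[OF assms(1), of h a], of C] unfolding \<beta>_def
    by (simp add: mult.left_commute)
  have "size_exp_feasible \<delta> k \<beta>"
  proof (rule size_exp_feasibleI[of \<beta>])
    have no_zero: "{v \<in> V. a v = 0} = {}" using assms(2) by fastforce
    show "\<beta> 0 = 0" unfolding \<beta>_def no_zero by simp
    show "0 \<le> \<beta> i" for i using assms(4) by (simp add: \<beta>_def)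
    show "\<beta> sums (C * real (card V))" using level[of "\<lambda>_. 1"] by simp
    show "(\<lambda>i. real i * \<beta> i) sums k" using level[of real] assms(5) by simp
  qed (rule level, rule assms(6))
  from size_exp_le[OF this assms(3)] show ?thesis
    using level[of "\<lambda>_. 1"] by (simp add: sums_iff)
qed

lemma coverage_sum_scale_up:
  assumes "1 \<le> k" "k \<le> k'" "size_exp_feasible \<delta> k \<beta>"
  shows "(\<Sum>i. coverage k i * \<beta> i) + (1 / k - 1 / k') / k * (\<Sum>i. if 2 \<le> i then \<beta> i else 0)
    \<le> k' / k * (\<Sum>i. coverage k' i * \<beta> i)"
proof -
  note f = size_exp_feasibleD[OF assms(3)]
  define \<rho> where "\<rho> = (1 / k - 1 / k') / k"
  define \<sigma> where "\<sigma> = k' / k"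
  have sum_cov': "summable (\<lambda>i. coverage k' i * \<beta> i)"
    by (rule summable_coverage[OF sums_summable[OF f(3)] f(2)]) (use assms in simp)
  have sum_tail: "summable (\<lambda>i. if 2 \<le> i then \<beta> i else 0)"
    by (rule summable_comparison_test_ev[OF _ sums_summable[OF f(3)]])
      (use f(2) in \<open>auto intro!: always_eventually\<close>)
  have "coverage k i * \<beta> i + \<rho> * (if 2 \<le> i then \<beta> i else 0) \<le> \<sigma> * (coverage k' i * \<beta> i)" for i
  proof -
    have scaled: "c * b + e / k * b \<le> k' / k * (c' * b)" if "c * k + e \<le> c' * k'" "0 \<le> b" for c c' e b :: real
      using divide_right_mono[OF mult_right_mono[OF that], of k] assms(1)
      by (simp add: field_simps)
    show ?thesis unfolding \<rho>_def \<sigma>_def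
      using scaled[OF coverage_mult_mono[OF assms(1,2), of i] f(2)] by (cases "2 \<le> i") auto
  qed
  then have "(\<Sum>i. coverage k i * \<beta> i + \<rho> * (if 2 \<le> i then \<beta> i else 0))
      \<le> (\<Sum>i. \<sigma> * (coverage k' i * \<beta> i))"
    by (intro suminf_le summable_add summable_mult sums_summable[OF f(5)] sum_cov' sum_tail)
  then show ?thesis
    using suminf_add[OF sums_summable[OF f(5)] summable_mult[OF sum_tail]]
      suminf_mult[OF sum_tail] suminf_mult[OF sum_cov'] by (simp add: \<rho>_def[symmetric] \<sigma>_def[symmetric])
qed

lemma size_exp_feasible_scale_up:
  assumes "1 \<le> k" "k \<le> k'" "size_exp_feasible \<delta> k \<beta>" "\<delta>' \<le> k' / k * (\<Sum>i. coverage k' i * \<beta> i)"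
  shows "size_exp_feasible \<delta>' k' (\<lambda>i. k' / k * \<beta> i)"
proof -
  note f = size_exp_feasibleD[OF assms(3)]
  have "summable (\<lambda>i. coverage k' i * \<beta> i)"
    by (rule summable_coverage[OF sums_summable[OF f(3)] f(2)]) (use assms in simp)
  from summable_sums[OF this] have "(\<lambda>i. coverage k' i * (k' / k * \<beta> i)) sums
      (k' / k * (\<Sum>i. coverage k' i * \<beta> i))"
    using sums_mult[of _ _ "k' / k"] by (simp add: mult.left_commute)
  moreover have "(\<lambda>i. real i * (k' / k * \<beta> i)) sums k'"
    using sums_mult[OF f(4), of "k' / k"] assms(1) by (simp add: mult.left_commute)
  ultimately show ?thesis
    using f(1,2) assms(1,2,4) by (intro size_exp_feasibleI[OF _ _ sums_mult[OF f(3)]]) auto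
qed

lemma size_exp_feasible_scale_down:
  assumes "1 \<le> k" "k \<le> k'" "size_exp_feasible \<delta> k' \<beta>"
  shows "size_exp_feasible (k / k' * \<delta>) k (\<lambda>i. k / k' * \<beta> i)"
proof -
  note f = size_exp_feasibleD[OF assms(3)]
  have sum_cov: "summable (\<lambda>i. coverage k i * \<beta> i)"
    by (rule summable_coverage[OF sums_summable[OF f(3)] f(2) assms(1)])
  have "coverage k' i * \<beta> i \<le> coverage k i * \<beta> i" for i
  proof -
    have "(1 - 1 / k) ^ i \<le> (1 - 1 / k') ^ i"
      by (rule power_mono) (use assms in \<open>auto simp: field_simps\<close>)
    then show ?thesis using f(2) by (intro mult_right_mono) auto
  qed
  then have "\<delta> \<le> (\<Sum>i. coverage k i * \<beta> i)"
    using f(6) suminf_le[OF _ sums_summable[OF f(5)] sum_cov] by fastforce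
  then have "k / k' * \<delta> \<le> k / k' * (\<Sum>i. coverage k i * \<beta> i)"
    using assms by (intro mult_left_mono) auto
  moreover from summable_sums[OF sum_cov] have "(\<lambda>i. coverage k i * (k / k' * \<beta> i)) sums
      (k / k' * (\<Sum>i. coverage k i * \<beta> i))"
    using sums_mult[of _ _ "k / k'"] by (simp add: mult.left_commute)
  moreover have "(\<lambda>i. real i * (k / k' * \<beta> i)) sums k"
    using sums_mult[OF f(4), of "k / k'"] assms by (simp add: mult.left_commute)
  ultimately show ?thesis
    using f(1,2) assms(1,2) by (intro size_exp_feasibleI[OF _ _ sums_mult[OF f(3)]]) auto
qed

lemma size_exp_antimono:
  assumes "1 \<le> k" "k \<le> k'" "\<delta> \<le> 1"
  shows "size_exp \<delta> k' \<le> size_exp \<delta> k"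
proof (rule size_exp_ge[OF assms(1,3)])
  fix \<beta> assume feasible: "size_exp_feasible \<delta> k \<beta>"
  have "0 \<le> (1 / k - 1 / k') / k * (\<Sum>i. if 2 \<le> i then \<beta> i else 0)"
    using assms size_exp_feasibleD(2)[OF feasible]
    by (intro mult_nonneg_nonneg suminf_nonneg summable_comparison_test_ev[OF _ sums_summable[OF size_exp_feasibleD(3)[OF feasible]]])
      (auto simp: field_simps intro!: always_eventually)
  then have "\<delta> \<le> k' / k * (\<Sum>i. coverage k' i * \<beta> i)"
    using size_exp_feasibleD(6)[OF feasible] coverage_sum_scale_up[OF assms(1,2) feasible] by linarith
  from size_exp_le[OF size_exp_feasible_scale_up[OF assms(1,2) feasible this]] assms
  show "size_exp \<delta> k' \<le> suminf \<beta> / k"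
    using suminf_mult[OF sums_summable[OF size_exp_feasibleD(3)[OF feasible]], of "k' / k"] by simp
qed

lemma size_exp_scale_down_le:
  assumes "1 \<le> k" "k \<le> k'" "\<delta> \<le> 1"
  shows "size_exp (k / k' * \<delta>) k \<le> size_exp \<delta> k'"
proof (rule size_exp_ge)
  show "1 \<le> k'" "\<delta> \<le> 1" using assms by auto
  fix \<beta> assume "size_exp_feasible \<delta> k' \<beta>"
  from size_exp_le[OF size_exp_feasible_scale_down[OF assms(1,2) this]] assms(1,2)
  show "size_exp (k / k' * \<delta>) k \<le> suminf \<beta> / k'"
    using suminf_mult[OF sums_summable[OF size_exp_feasibleD(3)[OF \<open>size_exp_feasible \<delta> k' \<beta>\<close>]], of "k / k'"]
    by simp
qed

lemma size_exp_le_mix_unit: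
  assumes "size_exp_feasible \<delta>' k \<beta>" "1 \<le> k" "0 \<le> \<theta>" "\<theta> \<le> 1" "\<delta> \<le> (1 - \<theta>) * \<delta>' + \<theta>"
  shows "size_exp \<delta> k \<le> (1 - \<theta>) * (suminf \<beta> / k) + \<theta>"
proof -
  have "(\<lambda>i. if i = 1 then k else 0) sums k"
    using sums_single[of 1 "\<lambda>_. k"] by simp
  with size_exp_le_convex[OF assms(1) size_exp_feasible_unit[OF assms(2), of 1]] assms
  show ?thesis by (simp add: sums_iff)
qed

lemma size_exp_delta_shift:
  assumes "0 \<le> \<delta>'" "\<delta>' \<le> \<delta>" "\<delta> < 1" "1 \<le> k"
  shows "size_exp \<delta> k \<le> size_exp \<delta>' k + (\<delta> - \<delta>') / (1 - \<delta>')"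
proof -
  define \<theta> where "\<theta> = (\<delta> - \<delta>') / (1 - \<delta>')"
  have \<theta>: "0 \<le> \<theta>" "\<theta> \<le> 1" using assms by (auto simp: \<theta>_def)
  have "\<theta> * (1 - \<delta>') = \<delta> - \<delta>'" using assms by (simp add: \<theta>_def)
  then have mix: "(1 - \<theta>) * \<delta>' + \<theta> * 1 = \<delta>" by (simp add: algebra_simps)
  have "size_exp \<delta> k - \<theta> \<le> size_exp \<delta>' k"
  proof (rule size_exp_ge)
    show "1 \<le> k" "\<delta>' \<le> 1" using assms by auto
    fix \<beta> assume feasible: "size_exp_feasible \<delta>' k \<beta>"
    have "0 \<le> suminf \<beta> / k"
      using size_exp_feasible_mass_ge[OF feasible] assms by simp
    then have "(1 - \<theta>) * (suminf \<beta> / k) \<le> suminf \<beta> / k"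
      using \<theta> by (intro mult_left_le_one_le) auto
    with size_exp_le_mix_unit[OF feasible assms(4) \<theta>, of \<delta>] mix
    show "size_exp \<delta> k - \<theta> \<le> suminf \<beta> / k" by simp
  qed
  then show ?thesis by (simp add: \<theta>_def)
qed

lemma size_exp_le_add:
  assumes "0 \<le> \<delta>" "\<delta> < 1" "1 \<le> k" "k \<le> k'"
  shows "size_exp \<delta> k \<le> size_exp \<delta> k' + (k' - k) / (1 - \<delta>)"
proof -
  define \<delta>' where "\<delta>' = k / k' * \<delta>"
  have "k / k' \<le> 1" using assms by simp
  then have \<delta>': "0 \<le> \<delta>'" "\<delta>' \<le> \<delta>"
    using assms mult_left_le_one_le[of \<delta> "k / k'"] unfolding \<delta>'_def by auto
  have "\<delta> - \<delta>' = (k' - k) / k' * \<delta>"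
    using assms by (simp add: \<delta>'_def field_simps)
  also have "\<dots> \<le> (k' - k) / k'"
    using assms by (intro mult_right_le_one_le) auto
  also have "\<dots> \<le> k' - k"
    using assms by (simp add: divide_le_eq mult_le_cancel_left1)
  finally have "(\<delta> - \<delta>') / (1 - \<delta>') \<le> (k' - k) / (1 - \<delta>)"
    using \<delta>' assms by (intro frac_le) auto
  moreover have "size_exp \<delta>' k \<le> size_exp \<delta> k'"
    unfolding \<delta>'_def using assms by (intro size_exp_scale_down_le) auto
  ultimately show ?thesis
    using size_exp_delta_shift[OF \<delta>' assms(2,3)] by linarith
qed

lemma size_exp_le_add_bound:
  assumes "0 \<le> \<delta>" "\<delta> < 1" "1 \<le> K" "1 \<le> k" "k - K \<le> r" "0 \<le> r"
  shows "size_exp \<delta> K \<le> size_exp \<delta> k + r / (1 - \<delta>)"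
proof (cases "k \<le> K")
  case True
  moreover have "0 \<le> r / (1 - \<delta>)" using assms by simp
  ultimately show ?thesis using size_exp_antimono[of k K \<delta>] assms by linarith
next
  case False
  have "(k - K) / (1 - \<delta>) \<le> r / (1 - \<delta>)" using assms by (intro divide_right_mono) auto
  then show ?thesis using size_exp_le_add[of \<delta> K k] False assms by simp
qed

lemma size_exp_lipschitz:
  assumes "0 \<le> \<delta>" "\<delta> < 1"
  shows "(1 / (1 - \<delta>))-lipschitz_on {1..} (size_exp \<delta>)"
proof (rule lipschitz_onI)
  have bound: "\<bar>size_exp \<delta> k - size_exp \<delta> k'\<bar> \<le> 1 / (1 - \<delta>) * \<bar>k - k'\<bar>"
    if "1 \<le> k" "k \<le> k'" for k k'
    using size_exp_antimono[of k k' \<delta>] size_exp_le_add[OF assms that] that assms by simp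
  fix k k' :: real assume "k \<in> {1..}" "k' \<in> {1..}"
  then show "dist (size_exp \<delta> k) (size_exp \<delta> k') \<le> 1 / (1 - \<delta>) * dist k k'"
    using bound[of k k'] bound[of k' k] unfolding dist_real_def
    by (cases "k \<le> k'") (auto simp: abs_minus_commute)
qed (use assms in simp)

lemma size_exp_le_point_mass:
  assumes "1 \<le> N" "0 < k" "\<delta> \<le> coverage k N * k / N"
  shows "size_exp \<delta> k \<le> 1 / N"
  using size_exp_le[OF size_exp_feasible_point_mass[OF assms(1) less_imp_le[OF assms(2)] assms(3)] assms(2)]
    sums_single[of N "\<lambda>_. k / N"] assms(2) by (simp add: sums_iff)

lemma size_exp_less_delta:
  assumes "1 < k" "0 < \<delta>" "\<delta> < 1"
  shows "size_exp \<delta> k < \<delta>"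
proof -
  obtain N :: nat where N: "max 2 (k / \<delta>) < N" using reals_Archimedean2 by blast
  define b where "b = coverage k N * k / N"
  have "(\<Sum>j\<in>{0, 1}. (1 - 1 / k) ^ j) \<le> (\<Sum>j<N. (1 - 1 / k) ^ j)"
    by (rule sum_mono2) (use N assms in auto)
  then have "2 - 1 / k \<le> coverage k N * k"
    using assms(1) coverage_mult_eq_sum[of k N] by simp
  moreover have "1 / k < 1" using assms by simp
  ultimately have "1 < coverage k N * k" by linarith
  then have b_gt: "1 / N < b"
    unfolding b_def using N by (simp add: divide_strict_right_mono)
  have "b \<le> k / N"
    unfolding b_def using coverage_bounds(2)[of k N] N assms(1) by (simp add: divide_right_mono)
  also have "\<dots> < \<delta>" using N assms by (simp add: field_simps)
  finally have b_lt: "b < \<delta>" .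
  define \<theta> where "\<theta> = (\<delta> - b) / (1 - b)"
  have \<theta>: "0 \<le> \<theta>" "\<theta> < 1" using b_lt assms by (auto simp: \<theta>_def)
  have "(1 - \<theta>) * (1 - b) = 1 - \<delta>" using b_lt assms by (simp add: \<theta>_def field_simps)
  then have mix: "(1 - \<theta>) * b + \<theta> = \<delta>" by (simp add: algebra_simps)
  have "size_exp \<delta> k \<le> (1 - \<theta>) * ((k / N) / k) + \<theta>"
    using size_exp_le_mix_unit[OF size_exp_feasible_point_mass[of N k b]] sums_single[of N "\<lambda>_. k / N"]
      N assms \<theta> mix by (simp add: b_def sums_iff)
  also have "\<dots> < (1 - \<theta>) * b + \<theta>"
    using mult_strict_left_mono[OF b_gt, of "1 - \<theta>"] \<theta> assms by simp
  finally show ?thesis using mix by simp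
qed

lemma size_exp_feasible_tail_bound:
  assumes "size_exp_feasible \<delta> k \<beta>" "1 \<le> k"
  shows "\<delta> \<le> suminf \<beta> / k + (\<Sum>i. if 2 \<le> i then \<beta> i else 0)"
proof -
  note f = size_exp_feasibleD[OF assms(1)]
  have sum_tail: "summable (\<lambda>i. if 2 \<le> i then \<beta> i else 0)"
    by (rule summable_comparison_test_ev[OF _ sums_summable[OF f(3)]])
      (use f(2) in \<open>auto intro!: always_eventually\<close>)
  have "coverage k i * \<beta> i \<le> \<beta> i / k + (if 2 \<le> i then \<beta> i else 0)" for i
  proof -
    consider "i = 0" | "i = 1" | "2 \<le> i" by linarith
    then show ?thesis
    proof cases
      case 3
      have "coverage k i * \<beta> i \<le> \<beta> i"
        using f(2)[of i] coverage_bounds[OF assms(2), of i] by (intro mult_left_le_one_le) auto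
      moreover have "0 \<le> \<beta> i / k" using f(2)[of i] assms(2) by simp
      ultimately show ?thesis using 3 by simp
    qed (use f(1) in auto)
  qed
  then have "(\<Sum>i. coverage k i * \<beta> i) \<le> (\<Sum>i. \<beta> i / k + (if 2 \<le> i then \<beta> i else 0))"
    by (intro suminf_le summable_add summable_divide sums_summable[OF f(5)] sums_summable[OF f(3)] sum_tail)
  also have "\<dots> = suminf \<beta> / k + (\<Sum>i. if 2 \<le> i then \<beta> i else 0)"
    using suminf_add[OF summable_divide[OF sums_summable[OF f(3)]] sum_tail]
      suminf_divide[OF sums_summable[OF f(3)]] by simp
  finally show ?thesis using f(6) by linarith
qed

lemma size_exp_le_slack_mix:
  fixes N :: nat
  assumes "1 \<le> k" "k \<le> k'" "size_exp_feasible \<delta> k \<beta>" "0 < \<delta>" "0 < \<sigma>" "1 \<le> N"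
    and slack: "\<delta> + \<sigma> \<le> k' / k * (\<Sum>i. coverage k' i * \<beta> i)"
  shows "size_exp \<delta> k' \<le> (1 - \<sigma> / (\<delta> + \<sigma>)) * (suminf \<beta> / k) + \<sigma> / (\<delta> + \<sigma>) * (1 / N)"
proof -
  define \<theta> where "\<theta> = \<sigma> / (\<delta> + \<sigma>)"
  have \<theta>: "0 \<le> \<theta>" "\<theta> \<le> 1" "\<delta> \<le> (1 - \<theta>) * (\<delta> + \<sigma>) + \<theta> * 0"
    using assms(4,5) by (auto simp: \<theta>_def field_simps)
  have scaled: "size_exp_feasible (\<delta> + \<sigma>) k' (\<lambda>i. k' / k * \<beta> i)"
    by (rule size_exp_feasible_scale_up[OF assms(1-3) slack])
  have point_mass: "size_exp_feasible 0 k' (\<lambda>i. if i = N then k' / N else 0)"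
    using assms(1,2,6) coverage_bounds(1)[of k' N] by (intro size_exp_feasible_point_mass) auto
  from size_exp_le_convex[OF scaled point_mass _ \<theta>] assms(1,2) show ?thesis
    using suminf_mult[OF sums_summable[OF size_exp_feasibleD(3)[OF assms(3)]], of "k' / k"]
      sums_single[of N "\<lambda>_. k' / N"]
    by (simp add: sums_iff \<theta>_def mult.commute)
qed

(* Rescaling a point feasible at k to k' gains coverage only through its mass on i >= 2. If that
   mass is small, the objective at k is already close to delta > size_exp delta k'; otherwise the gain
   pays for moving some mass to a far point mass, which lowers the objective at k'. *)
lemma size_exp_strict_antimono:
  assumes "1 < k" "k < k'" "0 < \<delta>" "\<delta> < 1"
  shows "size_exp \<delta> k' < size_exp \<delta> k"
proof -
  define g where "g = \<delta> - size_exp \<delta> k'"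
  have g: "0 < g" using size_exp_less_delta[of k' \<delta>] assms by (simp add: g_def)
  define \<sigma> where "\<sigma> = (1 / k - 1 / k') / k * (g / 2)"
  have \<sigma>: "0 < \<sigma>" using assms g by (simp add: \<sigma>_def field_simps)
  define \<theta> where "\<theta> = \<sigma> / (\<delta> + \<sigma>)"
  have \<theta>: "0 < \<theta>" using \<sigma> assms by (simp add: \<theta>_def)
  obtain N :: nat where N: "2 * k / \<delta> < N" using reals_Archimedean2 by blast
  have N1: "1 \<le> N" using N assms by (cases N) (auto simp: field_simps)
  have inv_N: "1 / N \<le> \<delta> / (2 * k)" using N N1 assms by (simp add: field_simps)
  define gap where "gap = min (g / 2) (\<theta> * \<delta> / (2 * k))"
  have "size_exp \<delta> k' + gap \<le> size_exp \<delta> k"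
  proof (rule size_exp_ge)
    show "1 \<le> k" "\<delta> \<le> 1" using assms by auto
    fix \<beta> assume feasible: "size_exp_feasible \<delta> k \<beta>"
    define X where "X = (\<Sum>i. if 2 \<le> i then \<beta> i else 0)"
    show "size_exp \<delta> k' + gap \<le> suminf \<beta> / k"
    proof (cases "X < g / 2")
      case True
      moreover have "gap \<le> g / 2" by (simp add: gap_def)
      ultimately show ?thesis
        using size_exp_feasible_tail_bound[OF feasible less_imp_le[OF assms(1)]]
        unfolding g_def X_def by argo
    next
      case False
      have "\<sigma> \<le> (1 / k - 1 / k') / k * X"
        unfolding \<sigma>_def using False assms by (intro mult_left_mono) (auto simp: field_simps)
      then have "\<delta> + \<sigma> \<le> k' / k * (\<Sum>i. coverage k' i * \<beta> i)"
        using coverage_sum_scale_up[OF _ _ feasible, of k'] size_exp_feasibleD(6)[OF feasible] assms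
        unfolding X_def by linarith
      from size_exp_le_slack_mix[OF _ _ feasible _ \<sigma> N1 this] assms
      have "size_exp \<delta> k' \<le> (1 - \<theta>) * (suminf \<beta> / k) + \<theta> * (1 / N)"
        unfolding \<theta>_def by simp
      also have "\<dots> \<le> suminf \<beta> / k - \<theta> * (\<delta> / (2 * k))"
      proof -
        have "\<delta> / k \<le> suminf \<beta> / k"
          using size_exp_feasible_mass_ge[OF feasible] assms by (simp add: divide_right_mono)
        then have "\<theta> * (\<delta> / k) \<le> \<theta> * (suminf \<beta> / k)" using \<theta> by (intro mult_left_mono) auto
        moreover have "\<theta> * (1 / N) \<le> \<theta> * (\<delta> / (2 * k))" using \<theta> inv_N by (intro mult_left_mono) auto
        moreover have "\<theta> * (\<delta> / (2 * k)) = \<theta> * (\<delta> / k) / 2" by simp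
        moreover have "(1 - \<theta>) * (suminf \<beta> / k) = suminf \<beta> / k - \<theta> * (suminf \<beta> / k)"
          by (simp only: left_diff_distrib mult_1)
        ultimately show ?thesis by argo
      qed
      finally have "size_exp \<delta> k' \<le> suminf \<beta> / k - \<theta> * \<delta> / (2 * k)" by simp
      moreover have "gap \<le> \<theta> * \<delta> / (2 * k)" by (simp add: gap_def)
      ultimately show ?thesis by linarith
    qed
  qed
  moreover have "0 < gap" using g \<theta> assms by (simp add: gap_def)
  ultimately show ?thesis by linarith
qed

lemma eventually_size_exp_less:
  assumes "\<delta> < 1" "0 < y"
  shows "\<forall>\<^sub>F k in at_top. size_exp \<delta> k < y"
proof -
  obtain N :: nat where N: "1 / y < N" using reals_Archimedean2 by blast
  have N1: "1 \<le> N" using N assms(2) by (cases N) auto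
  have inv_N: "1 / N < y" using N N1 assms(2) by (simp add: field_simps)
  have "((\<lambda>k::real. 1 - inverse k) \<longlongrightarrow> 1 - 0) at_top"
    by (intro tendsto_intros tendsto_inverse_0_at_top filterlim_ident)
  then have "((\<lambda>k::real. (\<Sum>j<N. (1 - 1 / k) ^ j) / N) \<longlongrightarrow> (\<Sum>j<N. 1 ^ j) / N) at_top"
    using N1 by (intro tendsto_intros) (simp_all add: divide_inverse)
  then have "\<forall>\<^sub>F k in at_top. \<delta> < (\<Sum>j<N. (1 - 1 / k) ^ j) / N"
    using N1 assms(1) by (intro order_tendstoD(1)) auto
  then show ?thesis
    using eventually_gt_at_top[of 0]
  proof eventually_elim
    case (elim k)
    then have "\<delta> \<le> coverage k N * k / N" by (simp add: coverage_mult_eq_sum)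
    from size_exp_le_point_mass[OF N1 elim(2) this] inv_N show ?case by simp
  qed
qed

lemma size_exp_ge_delta_div:
  assumes "1 \<le> k" "\<delta> \<le> 1"
  shows "\<delta> / k \<le> size_exp \<delta> k"
  using size_exp_feasible_mass_ge assms by (intro size_exp_ge) (auto intro: divide_right_mono)

lemma size_exp_inv:
  assumes "0 < y" "y < \<delta>" "\<delta> < 1"
  shows "1 < size_exp_inv \<delta> y" "size_exp \<delta> (size_exp_inv \<delta> y) = y"
proof -
  define k\<^sub>0 where "k\<^sub>0 = (1 + \<delta> / y) / 2"
  have k\<^sub>0: "1 < k\<^sub>0" "k\<^sub>0 * y < \<delta>" using assms by (auto simp: k\<^sub>0_def field_simps)
  have "y < \<delta> / k\<^sub>0" using k\<^sub>0 by (simp add: field_simps)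
  also have "\<dots> \<le> size_exp \<delta> k\<^sub>0" using k\<^sub>0 assms by (intro size_exp_ge_delta_div) auto
  finally have above: "y \<le> size_exp \<delta> k\<^sub>0" by simp
  obtain K where "\<forall>k\<ge>K. size_exp \<delta> k < y"
    using eventually_size_exp_less[OF assms(3,1)] by (auto simp: eventually_at_top_linorder)
  then have below: "size_exp \<delta> (max K k\<^sub>0) \<le> y" by (meson less_imp_le max.cobounded1)
  have "continuous_on {1..} (size_exp \<delta>)"
    using lipschitz_on_continuous_on[OF size_exp_lipschitz[of \<delta>]] assms by simp
  then have "continuous_on {k\<^sub>0..max K k\<^sub>0} (size_exp \<delta>)"
    by (rule continuous_on_subset) (use k\<^sub>0 in auto)
  from IVT2'[OF below above _ this] obtain k where k: "k\<^sub>0 \<le> k" "size_exp \<delta> k = y" by auto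
  have "\<exists>!k. 1 < k \<and> size_exp \<delta> k = y"
  proof (rule ex1I[of _ k])
    fix k' assume k': "1 < k' \<and> size_exp \<delta> k' = y"
    show "k' = k"
      using size_exp_strict_antimono[of k k' \<delta>] size_exp_strict_antimono[of k' k \<delta>] k k' k\<^sub>0 assms
      by (cases k k' rule: linorder_cases) auto
  qed (use k k\<^sub>0 in auto)
  from theI'[OF this] show "1 < size_exp_inv \<delta> y" "size_exp \<delta> (size_exp_inv \<delta> y) = y"
    unfolding size_exp_inv_def by auto
qed

section \<open>Tanner codes on bipartite graphs\<close>

lemma binary_linear_code_tanner_code:
  assumes "binary_linear_code d C0"
  shows "binary_linear_code n (tanner_code n m d nbr C0)"
proof -
  define view where "view = (\<lambda>x v i. if i < d then x (nbr v i) else False)"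
  have tanner: "tanner_code n m d nbr C0 = {x \<in> bvecs n. \<forall>v<m. view x v \<in> C0}"
    unfolding tanner_code_def view_def ..
  have "view (\<lambda>_. False) v = (\<lambda>_. False)" "view (\<lambda>u. x u \<noteq> y u) v = (\<lambda>i. view x v i \<noteq> view y v i)"
    for x y :: "nat \<Rightarrow> bool" and v
    by (auto simp: view_def)
  with assms show ?thesis
    unfolding binary_linear_code_def tanner by (auto simp: bvecs_def)
qed

lemma min_dist_le_weight:
  assumes "binary_linear_code k C" "x \<in> C" "x \<noteq> (\<lambda>_. False)"
  shows "min_dist C \<le> enat (card {i. x i})"
proof -
  have "(x, \<lambda>_. False) \<in> {(x, y). x \<in> C \<and> y \<in> C \<and> x \<noteq> y}"
    using assms unfolding binary_linear_code_def by auto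
  then show ?thesis unfolding min_dist_def hamming_dist_def
    by (rule INF_lower2) simp
qed

lemma min_dist_le_length:
  assumes "C \<subseteq> bvecs k" "min_dist C = enat d0"
  shows "d0 \<le> k"
proof -
  have "{(x, y). x \<in> C \<and> y \<in> C \<and> x \<noteq> y} \<noteq> {}"
  proof
    assume "{(x, y). x \<in> C \<and> y \<in> C \<and> x \<noteq> y} = {}"
    then have "min_dist C = \<infinity>" unfolding min_dist_def by (simp only: image_empty Inf_empty top_enat_def)
    with assms(2) show False by simp
  qed
  then obtain x y where xy: "x \<in> C" "y \<in> C" "x \<noteq> y" by auto
  have "enat d0 \<le> enat (hamming_dist x y)"
    unfolding assms(2)[symmetric] min_dist_def by (rule INF_lower2[of "(x, y)"]) (use xy in auto)
  also have "hamming_dist x y \<le> card {0..<k}"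
    unfolding hamming_dist_def using xy assms(1)
    by (intro card_mono) (auto simp: bvecs_def subset_iff not_le[symmetric])
  finally show ?thesis by simp
qed

lemma min_dist_greater:
  assumes "binary_linear_code k C"
    and weight: "\<And>x. x \<in> C \<Longrightarrow> x \<noteq> (\<lambda>_. False) \<Longrightarrow> r < real (card {i. x i})"
  shows "ereal r < ereal_of_enat (min_dist C)"
proof -
  define M where "M = nat (\<lfloor>r\<rfloor> + 1)"
  have "enat M \<le> min_dist C"
    unfolding min_dist_def
  proof (rule INF_greatest, clarify)
    fix x y assume xy: "x \<in> C" "y \<in> C" "x \<noteq> y"
    have "(\<lambda>i. x i \<noteq> y i) \<in> C" "(\<lambda>i. x i \<noteq> y i) \<noteq> (\<lambda>_. False)"
      using assms(1) xy unfolding binary_linear_code_def by (auto simp: fun_eq_iff)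
    from weight[OF this] have "M \<le> card {i. x i \<noteq> y i}"
      unfolding M_def by linarith
    then show "enat M \<le> enat (hamming_dist (fst (x, y)) (snd (x, y)))"
      by (simp add: hamming_dist_def)
  qed
  then have "ereal (real M) \<le> ereal_of_enat (min_dist C)"
    using ereal_of_enat_le_iff[of "enat M"] by simp
  moreover have "r < real M" unfolding M_def by linarith
  ultimately show ?thesis using less_le_trans[of "ereal r" "ereal (real M)"] by simp
qed

lemma tanner_code_support_subset:
  "x \<in> tanner_code n m d nbr C0 \<Longrightarrow> {u. x u} \<subseteq> {0..<n}"
  unfolding tanner_code_def bvecs_def by (auto simp: not_le[symmetric])

lemma sum_card_Int_nbrs:
  assumes "cd_regular c d n m nbr" "S \<subseteq> {0..<n}"
  shows "(\<Sum>v<m. card (S \<inter> nbr v ` {0..<d})) = c * card S"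
proof -
  have fin: "finite S" using assms(2) finite_subset by blast
  have "(\<Sum>v<m. card (S \<inter> nbr v ` {0..<d})) = (\<Sum>v<m. \<Sum>u\<in>S. of_bool (u \<in> nbr v ` {0..<d}))"
    using fin by simp
  also have "\<dots> = (\<Sum>u\<in>S. \<Sum>v<m. of_bool (u \<in> nbr v ` {0..<d}))"
    by (rule sum.swap)
  also have "\<dots> = (\<Sum>u\<in>S. c)"
  proof (rule sum.cong)
    fix u assume "u \<in> S"
    then have "card {v. v < m \<and> u \<in> nbr v ` {0..<d}} = c"
      using assms unfolding cd_regular_def by auto
    moreover have "{v. v < m \<and> u \<in> nbr v ` {0..<d}} = {..<m} \<inter> {v. u \<in> nbr v ` {0..<d}}" by auto
    ultimately show "(\<Sum>v<m. of_bool (u \<in> nbr v ` {0..<d})) = c" by simp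
  qed simp
  finally show ?thesis by simp
qed

lemma card_local_view:
  assumes "cd_regular c d n m nbr" "v < m"
  shows "card {i. if i < d then x (nbr v i) else False} = card ({u. x u} \<inter> nbr v ` {0..<d})"
proof -
  have "inj_on (nbr v) {0..<d}" using assms unfolding cd_regular_def by blast
  then have "card (nbr v ` {i \<in> {0..<d}. x (nbr v i)}) = card {i \<in> {0..<d}. x (nbr v i)}"
    by (rule card_image[OF inj_on_subset]) auto
  moreover have "{u. x u} \<inter> nbr v ` {0..<d} = nbr v ` {i \<in> {0..<d}. x (nbr v i)}" by blast
  moreover have "{i. if i < d then x (nbr v i) else False} = {i \<in> {0..<d}. x (nbr v i)}"
    unfolding atLeastLessThan_iff by (intro Collect_cong) simp
  ultimately show ?thesis by (simp only:)
qed

lemma tanner_codeword_card_nbhd: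
  assumes "cd_regular c d n m nbr" "binary_linear_code d C0" "min_dist C0 = enat d0"
    and x: "x \<in> tanner_code n m d nbr C0"
  shows "d0 * card (nbhd m d nbr {u. x u}) \<le> c * card {u. x u}"
proof -
  define S where "S = {u. x u}"
  have local_weight: "d0 \<le> card (S \<inter> nbr v ` {0..<d})" if v: "v \<in> nbhd m d nbr S" for v
  proof -
    define w where "w = (\<lambda>i. if i < d then x (nbr v i) else False)"
    from v have "v < m" and "\<exists>i<d. x (nbr v i)" unfolding nbhd_def S_def by auto
    then have "w \<in> C0" "w \<noteq> (\<lambda>_. False)"
      using x unfolding tanner_code_def w_def by (auto simp: fun_eq_iff)
    from min_dist_le_weight[OF assms(2) this] have "enat d0 \<le> enat (card {i. w i})"
      using assms(3) by simp
    then show ?thesis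
      using card_local_view[OF assms(1), of v x] v unfolding w_def S_def nbhd_def by simp
  qed
  have "d0 * card (nbhd m d nbr S) \<le> (\<Sum>v\<in>nbhd m d nbr S. card (S \<inter> nbr v ` {0..<d}))"
    using sum_bounded_below[of "nbhd m d nbr S" d0, OF local_weight] by (simp add: mult.commute)
  also have "\<dots> \<le> (\<Sum>v<m. card (S \<inter> nbr v ` {0..<d}))"
    by (rule sum_mono2) (auto simp: nbhd_def)
  also have "\<dots> = c * card S"
    using sum_card_Int_nbrs[OF assms(1) tanner_code_support_subset[OF x]] by (simp add: S_def)
  finally show ?thesis unfolding S_def .
qed

lemma expander_card_nbhd_ge:
  assumes "bipartite_expander c d \<alpha> \<delta> n m nbr" "S \<subseteq> {0..<n}" "t \<le> card S" "real t \<le> \<alpha> * real n"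
  shows "\<delta> * real c * real t \<le> real (card (nbhd m d nbr S))"
proof -
  obtain T where T: "T \<subseteq> S" "card T = t" using obtain_subset_with_card_n[OF assms(3)] by blast
  then have "\<delta> * real c * real t \<le> real (card (nbhd m d nbr T))"
    using assms unfolding bipartite_expander_def by auto
  also have "card (nbhd m d nbr T) \<le> card (nbhd m d nbr S)"
    using T unfolding nbhd_def by (intro card_mono) auto
  finally show ?thesis by simp
qed

section \<open>Averaging expansion over subsets\<close>

lemma card_subsets_meeting:
  assumes "finite S"
  shows "card {T. T \<subseteq> S \<and> card T = t \<and> T \<inter> X \<noteq> {}} = (card S choose t) - (card (S - X) choose t)"
proof -
  define A where "A = {T. T \<subseteq> S \<and> card T = t \<and> T \<inter> X \<noteq> {}}"
  define B where "B = {T. T \<subseteq> S - X \<and> card T = t}"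
  have "{T. T \<subseteq> S \<and> card T = t} = A \<union> B" "A \<inter> B = {}"
    unfolding A_def B_def by auto
  moreover have "finite A" "finite B" using assms unfolding A_def B_def by auto
  ultimately have "card S choose t = card A + card B"
    using n_subsets[OF assms, of t] card_Un_disjoint[of A B] by simp
  moreover have "card B = card (S - X) choose t" unfolding B_def using assms by (simp add: n_subsets)
  ultimately show ?thesis unfolding A_def by simp
qed

lemma choose_ratio_lower_bound:
  fixes s t a d :: nat
  assumes "a \<le> d" "d + t < s"
  shows "(1 - real t / real (s - d)) ^ a \<le> real ((s - a) choose t) / real (s choose t)"
  using assms(1)
proof (induction a)
  case 0
  then show ?case using assms by simp
next
  case (Suc a)
  define M where "M = s - a"
  have M: "1 \<le> M" "t \<le> M - 1" "s - d < M" using Suc.prems assms by (auto simp: M_def)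
  have IH: "(1 - real t / real (s - d)) ^ a \<le> real (M choose t) / real (s choose t)"
    using Suc by (simp add: M_def)
  have "real t / real M \<le> real t / real (s - d)"
    using M assms by (intro divide_left_mono) auto
  moreover have "real t / real (s - d) \<le> 1" using assms by simp
  ultimately have base: "0 \<le> 1 - real t / real (s - d)" "1 - real t / real (s - d) \<le> 1 - real t / real M"
    by auto
  have "(M - t) * (M choose t) = M * ((M - 1) choose t)" by (rule binomial_absorb_comp)
  then have "(real M - real t) * real (M choose t) = real M * real ((M - 1) choose t)"
    using M by (metis of_nat_diff of_nat_mult le_diff_conv le_trans le_add1)
  then have step: "real (M choose t) * (1 - real t / real M) = real ((M - 1) choose t)"
    using M by (simp add: field_simps)
  have "(1 - real t / real (s - d)) ^ Suc a \<le> real (M choose t) / real (s choose t) * (1 - real t / real M)"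
    unfolding power_Suc2 by (rule mult_mono[OF IH base(2)]) (use base(1) in simp_all)
  also have "\<dots> = real ((s - Suc a) choose t) / real (s choose t)"
    using step by (simp add: M_def)
  finally show ?case .
qed

lemma card_nbhd_eq_sum: "card (nbhd m d nbr T) = (\<Sum>v<m. of_bool (T \<inter> nbr v ` {0..<d} \<noteq> {}))"
proof -
  have "nbhd m d nbr T = {..<m} \<inter> {v. T \<inter> nbr v ` {0..<d} \<noteq> {}}"
    unfolding nbhd_def by auto
  then show ?thesis by simp
qed

(* The ratio of binomials is the probability that a uniformly random t-subset of S misses N(v). *)
lemma expander_average_hits:
  assumes "bipartite_expander c d \<alpha> \<delta> n m nbr" "S \<subseteq> {0..<n}" "t \<le> card S" "real t \<le> \<alpha> * real n"
  shows "\<delta> * real c * real t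
    \<le> (\<Sum>v<m. 1 - real ((card S - card (S \<inter> nbr v ` {0..<d})) choose t) / real (card S choose t))"
proof -
  define F where "F = {T. T \<subseteq> S \<and> card T = t}"
  have fin: "finite S" using assms(2) finite_subset by blast
  have card_F: "card F = card S choose t" unfolding F_def by (rule n_subsets[OF fin])
  have F_pos: "0 < real (card S choose t)" using assms(3) by simp
  have hits: "card {T \<in> F. T \<inter> nbr v ` {0..<d} \<noteq> {}}
      = (card S choose t) - ((card S - card (S \<inter> nbr v ` {0..<d})) choose t)" for v
    using card_subsets_meeting[OF fin, of t "nbr v ` {0..<d}"] card_Diff_subset_Int[of S] fin
    unfolding F_def by (simp add: conj_assoc)
  have "real (card F) * (\<delta> * real c * real t) \<le> (\<Sum>T\<in>F. real (card (nbhd m d nbr T)))"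
    using sum_bounded_below[of F "\<delta> * real c * real t" "\<lambda>T. real (card (nbhd m d nbr T))"]
      expander_card_nbhd_ge[OF assms(1), of _ t] assms(2,4) unfolding F_def by force
  also have "\<dots> = (\<Sum>v<m. real (card {T \<in> F. T \<inter> nbr v ` {0..<d} \<noteq> {}}))"
  proof -
    have "(\<Sum>T\<in>F. real (card (nbhd m d nbr T))) = (\<Sum>v<m. \<Sum>T\<in>F. of_bool (T \<inter> nbr v ` {0..<d} \<noteq> {}))"
      unfolding card_nbhd_eq_sum of_nat_sum of_nat_of_bool by (rule sum.swap)
    also have "\<dots> = (\<Sum>v<m. real (card {T \<in> F. T \<inter> nbr v ` {0..<d} \<noteq> {}}))"
      using fin unfolding F_def by (intro sum.cong) (simp_all add: Collect_conj_eq Int_assoc)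
    finally show ?thesis .
  qed
  also have "\<dots> = real (card F) * (\<Sum>v<m. 1 - real ((card S - card (S \<inter> nbr v ` {0..<d})) choose t) / real (card S choose t))"
    unfolding hits card_F sum_distrib_left using F_pos
    by (intro sum.cong) (simp_all add: of_nat_diff binomial_right_mono field_simps)
  finally show ?thesis using F_pos card_F by simp
qed

lemma expander_size_exp_bound:
  assumes expander: "bipartite_expander c d \<alpha> \<delta> n m nbr" and S: "S \<subseteq> {0..<n}"
    and "0 < c" "1 \<le> t" "d + t < card S" "real t \<le> \<alpha> * real n"
  shows "size_exp (\<delta> * (real (card S - d) / real (card S))) (real (card S - d) / real t)
    \<le> real (card (nbhd m d nbr S)) / (real c * real (card S))"
proof -
  define s where "s = card S"
  define a where "a v = card (S \<inter> nbr v ` {0..<d})" for v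
  define k where "k = real (s - d) / real t"
  define C where "C = k / (real c * real s)"
  define V where "V = nbhd m d nbr S"
  have fin: "finite S" using S finite_subset by blast
  have V: "finite V" "V \<subseteq> {..<m}" unfolding V_def nbhd_def by auto
  have k: "1 < k" "1 - 1 / k = 1 - real t / real (s - d)"
    using assms unfolding k_def s_def by auto
  have C: "0 < C" using assms k unfolding C_def s_def by simp
  have a_le: "a v \<le> d" for v
    using card_mono[OF _ Int_lower2, of "nbr v ` {0..<d}" S] card_image_le[of "{0..<d}" "nbr v"]
    unfolding a_def by simp
  have a_pos: "0 < a v" if "v \<in> V" for v
    using that fin unfolding V_def nbhd_def a_def by (auto simp: card_gt_0_iff)
  have a_zero: "a v = 0" if "v < m" "v \<notin> V" for v
  proof -
    have "S \<inter> nbr v ` {0..<d} = {}" using that unfolding V_def nbhd_def by auto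
    then show ?thesis unfolding a_def by simp
  qed
  have sum_V: "(\<Sum>v\<in>V. h (a v)) = (\<Sum>v<m. h (a v))" if "h 0 = 0" for h :: "nat \<Rightarrow> real"
    using that V a_zero by (intro sum.mono_neutral_left) auto
  have "(\<Sum>v<m. real (a v)) = real c * real s"
    using sum_card_Int_nbrs[of c d n m nbr S] expander S unfolding a_def s_def bipartite_expander_def
    by (simp flip: of_nat_sum)
  then have moment: "C * (\<Sum>v\<in>V. real (a v)) = k"
    using sum_V[of real] assms unfolding C_def s_def by simp
  have "\<delta> * real c * real t \<le> (\<Sum>v<m. 1 - real ((s - a v) choose t) / real (s choose t))"
    using expander_average_hits[OF expander S] assms unfolding a_def s_def by simp
  also have "\<dots> \<le> (\<Sum>v<m. coverage k (a v))"
    using choose_ratio_lower_bound[OF a_le, of t s] assms k(2) unfolding s_def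
    by (intro sum_mono) simp
  finally have "C * (\<delta> * real c * real t) \<le> C * (\<Sum>v\<in>V. coverage k (a v))"
    using C sum_V[of "coverage k"] by simp
  moreover have "C * (\<delta> * real c * real t) = \<delta> * (real (s - d) / real s)"
    using assms unfolding C_def k_def s_def by simp
  ultimately have "size_exp (\<delta> * (real (s - d) / real s)) k \<le> C * real (card V) / k"
    using size_exp_le_histogram[OF V(1) a_pos _ C moment] k by simp
  then show ?thesis
    using assms k unfolding C_def V_def s_def k_def by simp
qed

section \<open>The minimum distance\<close>

lemma tanner_codeword_weight_ge:
  assumes expander: "bipartite_expander c d \<alpha> \<delta> n m nbr"
    and code: "binary_linear_code d C0" "min_dist C0 = enat d0" "1 < \<delta> * real d0"
    and "0 < c" and x: "x \<in> tanner_code n m d nbr C0" "x \<noteq> (\<lambda>_. False)"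
    and "real t \<le> \<alpha> * real n"
  shows "\<delta> * real d0 * real t \<le> real (card {u. x u})"
proof -
  define s where "s = card {u. x u}"
  have S: "{u. x u} \<subseteq> {0..<n}" by (rule tanner_code_support_subset[OF x(1)])
  have "0 < s" using x(2) S finite_subset unfolding s_def by (auto simp: card_gt_0_iff fun_eq_iff)
  have "real d0 * real (card (nbhd m d nbr {u. x u})) \<le> real c * real s"
    using tanner_codeword_card_nbhd[OF _ code(1,2) x(1)] expander
    unfolding bipartite_expander_def s_def by (simp flip: of_nat_mult)
  moreover have "\<delta> * real c * real (min s t) \<le> real (card (nbhd m d nbr {u. x u}))"
    using expander_card_nbhd_ge[OF expander S] assms unfolding s_def by simp
  then have "\<delta> * real c * real (min s t) * real d0 \<le> real d0 * real (card (nbhd m d nbr {u. x u}))"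
    by (subst mult.commute[of "real d0"]) (rule mult_right_mono, simp_all)
  ultimately have "\<delta> * real c * real (min s t) * real d0 \<le> real c * real s"
    by linarith
  then have bound: "\<delta> * real d0 * real (min s t) \<le> real s"
    using \<open>0 < c\<close> by (simp add: algebra_simps)
  show ?thesis
  proof (cases "t \<le> s")
    case False
    then have "\<delta> * real d0 * real s \<le> 1 * real s" using bound by simp
    then show ?thesis using \<open>0 < s\<close> code(3) by (simp add: mult_le_cancel_right)
  qed (use bound s_def in simp)
qed

lemma tanner_codeword_size_exp_le:
  assumes expander: "bipartite_expander c d \<alpha> \<delta> n m nbr"
    and code: "binary_linear_code d C0" "min_dist C0 = enat d0" "0 < d0"
    and "0 < c" "0 < \<delta>" "\<delta> < 1" and x: "x \<in> tanner_code n m d nbr C0"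
    and t: "1 \<le> t" "real t \<le> \<alpha> * real n" and s_gt: "d + t < card {u. x u}"
  shows "size_exp \<delta> (real (card {u. x u} - d) / real t) \<le> 1 / real d0 + real d / ((1 - \<delta>) * real t)"
proof -
  define s where "s = card {u. x u}"
  define \<delta>' where "\<delta>' = \<delta> * (real (s - d) / real s)"
  have s_pos: "0 < real s" using s_gt by (simp add: s_def)
  have "size_exp \<delta>' (real (s - d) / real t) \<le> real (card (nbhd m d nbr {u. x u})) / (real c * real s)"
    unfolding \<delta>'_def s_def
    by (rule expander_size_exp_bound[OF expander tanner_code_support_subset[OF x] \<open>0 < c\<close> t(1) s_gt t(2)])
  also have "\<dots> \<le> 1 / real d0"
  proof -
    have "d0 * card (nbhd m d nbr {u. x u}) \<le> c * s"
      using tanner_codeword_card_nbhd[OF _ code(1,2) x] expander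
      unfolding bipartite_expander_def s_def by simp
    then have "real d0 * real (card (nbhd m d nbr {u. x u})) \<le> real c * real s"
      by (simp flip: of_nat_mult)
    with code(3) \<open>0 < c\<close> s_pos show ?thesis by (simp add: field_simps)
  qed
  finally have at_\<delta>': "size_exp \<delta>' (real (s - d) / real t) \<le> 1 / real d0" .
  have "real (s - d) / real s \<le> 1" using s_pos by simp
  then have \<delta>': "0 \<le> \<delta>'" "\<delta>' \<le> \<delta>"
    using \<open>0 < \<delta>\<close> mult_right_le_one_le[of \<delta> "real (s - d) / real s"] unfolding \<delta>'_def by auto
  have "\<delta> - \<delta>' = \<delta> * real d / real s"
    using s_gt s_pos unfolding \<delta>'_def s_def by (simp add: of_nat_diff field_simps)
  also have "\<dots> \<le> real d / real s"
    using \<open>0 < \<delta>\<close> \<open>\<delta> < 1\<close> s_pos by (intro divide_right_mono mult_left_le_one_le) auto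
  also have "\<dots> \<le> real d / real t"
    using s_gt t(1) unfolding s_def by (intro divide_left_mono) auto
  finally have "\<delta> - \<delta>' \<le> real d / real t" .
  then have "(\<delta> - \<delta>') / (1 - \<delta>') \<le> real d / real t / (1 - \<delta>)"
    using \<delta>' \<open>\<delta> < 1\<close> by (intro frac_le) auto
  also have "\<dots> = real d / ((1 - \<delta>) * real t)" by (simp add: mult.commute)
  finally have shift: "(\<delta> - \<delta>') / (1 - \<delta>') \<le> real d / ((1 - \<delta>) * real t)" .
  have "1 \<le> real (s - d) / real t" using s_gt t(1) unfolding s_def by simp
  from size_exp_delta_shift[OF \<delta>'(1,2) \<open>\<delta> < 1\<close> this] at_\<delta>' shift
  have "size_exp \<delta> (real (s - d) / real t) \<le> 1 / real d0 + real d / ((1 - \<delta>) * real t)"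
    by linarith
  then show ?thesis unfolding s_def .
qed

lemma tanner_codeword_weight_gt:
  assumes expander: "bipartite_expander c d \<alpha> \<delta> n m nbr"
    and code: "binary_linear_code d C0" "min_dist C0 = enat d0" "1 < \<delta> * real d0"
    and "0 < c" "0 < \<delta>" "\<delta> < 1" and K: "1 < K" "size_exp \<delta> K = 1 / real d0 + \<epsilon>"
    and x: "x \<in> tanner_code n m d nbr C0" "x \<noteq> (\<lambda>_. False)"
    and t: "1 \<le> t" "real t \<le> \<alpha> * real n" "\<alpha> * real n < real t + 1"
    and large: "real d < (\<delta> * real d0 - 1) * real t" "K + real d < (1 - \<delta>) * \<epsilon> * real t"
  shows "K * \<alpha> * real n < real (card {u. x u})"
proof (rule ccontr)
  define s where "s = card {u. x u}"
  define k where "k = real (s - d) / real t"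
  assume "\<not> ?thesis"
  then have s_le: "real s \<le> K * \<alpha> * real n" by (simp add: s_def)
  have "\<delta> * real d0 * real t \<le> real s"
    unfolding s_def using tanner_codeword_weight_ge[OF expander code \<open>0 < c\<close> x t(2)] .
  with large(1) have s_gt: "d + t < s" by (simp add: algebra_simps)
  have "0 < d0" using code(3) by (auto intro!: Nat.gr0I)
  have upper: "size_exp \<delta> k \<le> 1 / real d0 + real d / ((1 - \<delta>) * real t)"
    unfolding k_def s_def
    by (rule tanner_codeword_size_exp_le[OF expander code(1,2) \<open>0 < d0\<close> \<open>0 < c\<close>
          \<open>0 < \<delta>\<close> \<open>\<delta> < 1\<close> x(1) t(1,2)])
      (use s_gt s_def in simp)
  have "k \<le> real s / real t" unfolding k_def using s_gt by (simp add: divide_right_mono)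
  also have "\<dots> \<le> K * (real t + 1) / real t"
  proof -
    have "K * (\<alpha> * real n) \<le> K * (real t + 1)" using t(3) K(1) by (intro mult_left_mono) auto
    with s_le have "real s \<le> K * (real t + 1)" by (simp add: mult.assoc)
    then show ?thesis by (intro divide_right_mono) auto
  qed
  finally have "k - K \<le> K / real t" using t(1) by (simp add: field_simps)
  moreover have "1 \<le> k" using s_gt t(1) unfolding k_def by simp
  ultimately have "1 / real d0 + \<epsilon> \<le> size_exp \<delta> k + K / real t / (1 - \<delta>)"
    using size_exp_le_add_bound[of \<delta> K k "K / real t"] K \<open>0 < \<delta>\<close> \<open>\<delta> < 1\<close> by simp
  with upper have "\<epsilon> \<le> (K + real d) / ((1 - \<delta>) * real t)"
    by (simp add: add_divide_distrib mult.commute)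
  moreover have "0 < (1 - \<delta>) * real t" using \<open>\<delta> < 1\<close> t(1) by simp
  ultimately have "\<epsilon> * ((1 - \<delta>) * real t) \<le> K + real d"
    by (simp add: pos_le_divide_eq)
  with large(2) show False by (simp add: algebra_simps)
qed

lemma no_unit_expander:
  assumes "bipartite_expander c d \<alpha> 1 n m nbr" "0 < c" "2 \<le> d" "2 \<le> \<alpha> * real n"
  shows False
proof -
  have reg: "cd_regular c d n m nbr" using assms(1) unfolding bipartite_expander_def by simp
  have "0 < n" using assms(4) by (cases n) auto
  define A where "A u = {v. v < m \<and> u \<in> nbr v ` {0..<d}}" for u
  have card_A: "card (A u) = c" if "u < n" for u using reg that unfolding cd_regular_def A_def by simp
  have fin_A: "finite (A u)" for u unfolding A_def by simp
  obtain v where "v \<in> A 0" using card_A[OF \<open>0 < n\<close>] assms(2) by (metis card.empty ex_in_conv less_irrefl)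
  then have v: "v < m" unfolding A_def by simp
  have inj: "inj_on (nbr v) {0..<d}" and img: "nbr v ` {0..<d} \<subseteq> {0..<n}"
    using reg v unfolding cd_regular_def by auto
  define T where "T = {nbr v 0, nbr v 1}"
  have "nbr v 0 \<noteq> nbr v 1" using inj_on_eq_iff[OF inj, of 0 1] assms(3) by auto
  then have card_T: "card T = 2" unfolding T_def by simp
  have "0 \<in> {0..<d}" "1 \<in> {0..<d}" using assms(3) by auto
  then have T_sub: "T \<subseteq> {0..<n}" using img unfolding T_def by blast
  have "v \<in> A (nbr v 0) \<inter> A (nbr v 1)" unfolding A_def using v assms(3) by auto
  then have "1 \<le> card (A (nbr v 0) \<inter> A (nbr v 1))"
    using fin_A by (metis One_nat_def Suc_leI card_gt_0_iff empty_iff finite_Int)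
  moreover have "nbhd m d nbr T = A (nbr v 0) \<union> A (nbr v 1)"
    unfolding nbhd_def A_def T_def by (auto simp: image_iff; metis atLeastLessThan_iff le0)
  moreover have "card (A (nbr v 0) \<union> A (nbr v 1)) + card (A (nbr v 0) \<inter> A (nbr v 1)) = 2 * c"
    using card_Un_Int[OF fin_A fin_A, of "nbr v 0" "nbr v 1"] card_A T_sub unfolding T_def by simp
  moreover have "1 * real c * real (card T) \<le> real (card (nbhd m d nbr T))"
    using assms(1,4) T_sub card_T unfolding bipartite_expander_def by auto
  ultimately show False using card_T by simp
qed

lemma eventually_floor_mult_gt:
  assumes "0 < \<alpha>"
  shows "\<forall>\<^sub>F n in sequentially. B < real (nat \<lfloor>\<alpha> * real n\<rfloor>)"
proof -
  obtain N :: nat where N: "(B + 1) / \<alpha> < N" using reals_Archimedean2 by blast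
  have "B < real (nat \<lfloor>\<alpha> * real n\<rfloor>)" if "N \<le> n" for n
  proof -
    have "B + 1 < \<alpha> * real n"
      using N that assms by (simp add: field_simps) (smt (verit) mult_left_mono of_nat_le_iff)
    then show ?thesis using real_of_int_floor_add_one_gt[of "\<alpha> * real n"] by linarith
  qed
  then show ?thesis unfolding eventually_sequentially by blast
qed

lemma eventually_no_unit_expander:
  assumes "0 < c" "2 \<le> d" "0 < \<alpha>"
  shows "\<forall>\<^sub>F n in sequentially. \<forall>m nbr. \<not> bipartite_expander c d \<alpha> 1 n m nbr"
  using eventually_floor_mult_gt[OF assms(3), of 1]
proof eventually_elim
  case (elim n)
  then have "2 \<le> \<alpha> * real n" using of_nat_floor[of "\<alpha> * real n"] assms(3) by fastforce
  then show ?case using no_unit_expander assms(1,2) by blast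
qed

lemma eventually_tanner_min_dist_gt:
  assumes code: "binary_linear_code d C0" "min_dist C0 = enat d0" "1 < \<delta> * real d0"
    and "0 < c" "0 < \<alpha>" "0 < \<delta>" "\<delta> < 1" "0 < \<epsilon>"
    and K: "1 < K" "size_exp \<delta> K = 1 / real d0 + \<epsilon>"
  shows "\<forall>\<^sub>F n in sequentially. \<forall>m nbr. bipartite_expander c d \<alpha> \<delta> n m nbr \<longrightarrow>
      ereal (K * \<alpha> * real n) < ereal_of_enat (min_dist (tanner_code n m d nbr C0))"
proof -
  define B where "B = max 1 (max (real d / (\<delta> * real d0 - 1)) ((K + real d) / ((1 - \<delta>) * \<epsilon>)))"
  from eventually_floor_mult_gt[OF \<open>0 < \<alpha>\<close>, of B] show ?thesis
  proof eventually_elim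
    case (elim n)
    define t where "t = nat \<lfloor>\<alpha> * real n\<rfloor>"
    have "B < real t" using elim unfolding t_def .
    then have t_gt: "1 < real t" "real d / (\<delta> * real d0 - 1) < real t"
        "(K + real d) / ((1 - \<delta>) * \<epsilon>) < real t"
      unfolding B_def by auto
    have "1 \<le> t" using t_gt(1) by simp
    moreover have "real t \<le> \<alpha> * real n" "\<alpha> * real n < real t + 1"
      using of_nat_floor[of "\<alpha> * real n"] real_of_int_floor_add_one_gt[of "\<alpha> * real n"]
        of_nat_int_floor[of "\<alpha> * real n"] \<open>0 < \<alpha>\<close> unfolding t_def by auto
    ultimately have t: "1 \<le> t" "real t \<le> \<alpha> * real n" "\<alpha> * real n < real t + 1" by auto
    have large: "real d < (\<delta> * real d0 - 1) * real t" "K + real d < (1 - \<delta>) * \<epsilon> * real t"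
      using t_gt(2,3) code(3) \<open>\<delta> < 1\<close> \<open>0 < \<epsilon>\<close> by (auto simp: field_simps)
    show ?case
      using tanner_codeword_weight_gt[OF _ code \<open>0 < c\<close> \<open>0 < \<delta>\<close> \<open>\<delta> < 1\<close> K _ _ t large]
      by (auto intro!: min_dist_greater[OF binary_linear_code_tanner_code[OF code(1)]])
  qed
qed

theorem theorem5p6:
  fixes c d d0 :: nat and \<alpha> \<delta> \<epsilon> :: real and C0 :: "(nat \<Rightarrow> bool) set"
  assumes "c \<ge> 1" and "d \<ge> 1"
    and "0 < \<alpha>" and "\<alpha> \<le> 1" and "0 < \<delta>" and "\<delta> \<le> 1"
    and "binary_linear_code d C0" and "min_dist C0 = enat d0"
    and "\<delta> * real d0 > 1"
    and "0 < \<epsilon>" and "\<epsilon> < \<delta> - 1 / real d0"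
  shows "\<exists>N. \<forall>n \<ge> N. \<forall>m nbr. bipartite_expander c d \<alpha> \<delta> n m nbr \<longrightarrow>
           ereal_of_enat (min_dist (tanner_code n m d nbr C0))
             > ereal (size_exp_inv \<delta> (1 / real d0 + \<epsilon>) * \<alpha> * real n)"
proof -
  note code = assms(7-9)
  have "0 < c" using assms(1) by simp
  have "\<forall>\<^sub>F n in sequentially. \<forall>m nbr. bipartite_expander c d \<alpha> \<delta> n m nbr \<longrightarrow>
      ereal (size_exp_inv \<delta> (1 / real d0 + \<epsilon>) * \<alpha> * real n)
        < ereal_of_enat (min_dist (tanner_code n m d nbr C0))"
  proof (cases "\<delta> = 1")
    case True
    have "d0 \<le> d" using min_dist_le_length code(1,2) unfolding binary_linear_code_def by blast
    with code(3) True have "2 \<le> d" by simp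
    from eventually_no_unit_expander[OF \<open>0 < c\<close> this assms(3)] True show ?thesis
      by (auto elim: eventually_mono)
  next
    case False
    have "0 < 1 / real d0 + \<epsilon>" using assms(10) by (simp add: add_nonneg_pos)
    with size_exp_inv[of "1 / real d0 + \<epsilon>" \<delta>] assms(6,11) False
    show ?thesis by (intro eventually_tanner_min_dist_gt[OF code \<open>0 < c\<close> assms(3,5) _ assms(10)]) auto
  qed
  then show ?thesis unfolding eventually_sequentially by auto
qed

end
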